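(* For each $u\in(0,1)$, $Q(u)=G(u)$ if and only if $S(u)=G(u)$.
   Context: Let $\mu,\nu$ be probability measures on $\mathbb R$ with finite first moments and $\mu\le_{cx}\nu$. Put $P_\eta(k)=\int(k-x)^+\eta(dx)$, $D=P_\nu-P_\mu$, and assume $\{k:D(k)>0\}$ is an interval. Let $G$ be any quantile function of $\mu$. For $u\in(0,1)$ let $\mu_u(A)=\mu(A\cap(-\infty,G(u)))+\big(u-\mu((-\infty,G(u)))\big)\delta_{G(u)}(A)$ and $\mathcal E_u=P_\nu-P_{\mu_u}$. $f^c$ is the largest convex minorant of $f$; $X^f(y)=\sup\{x\le y: f^c(x)=f(x)\}$, $Z^f(y)=\inf\{z\ge y: f^c(z)=f(z)\}$. Define $Q(u)=X^{\mathcal E_u}(G(u))$ and $S(u)=Z^{\mathcal E_u}(G(u))$. *)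

theory Defs
  imports "HOL-Probability.Probability"
begin

text \<open>Integral of a convex function w.r.t. a measure with finite first moment, in the
  extended sense: positive part (possibly infinite) minus negative part (finite).\<close>
definition ext_integral :: "real measure \<Rightarrow> (real \<Rightarrow> real) \<Rightarrow> ereal" where
  "ext_integral M \<phi> =
     enn2ereal (\<integral>\<^sup>+ x. ennreal (\<phi> x) \<partial>M) - ereal (\<integral> x. max 0 (- \<phi> x) \<partial>M)"

definition convex_order :: "real measure \<Rightarrow> real measure \<Rightarrow> bool" where
  "convex_order \<mu> \<nu> \<longleftrightarrow>
     (\<forall>\<phi>::real \<Rightarrow> real. convex_on UNIV \<phi> \<longrightarrow> ext_integral \<mu> \<phi> \<le> ext_integral \<nu> \<phi>)"

definition put_price :: "real measure \<Rightarrow> real \<Rightarrow> real" where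
  "put_price \<eta> k = (\<integral> x. max 0 (k - x) \<partial>\<eta>)"

definition quantile_function :: "real measure \<Rightarrow> (real \<Rightarrow> real) \<Rightarrow> bool" where
  "quantile_function \<mu> G \<longleftrightarrow>
     (\<forall>u \<in> {0<..<1}. measure \<mu> {..<G u} \<le> u \<and> u \<le> measure \<mu> {..G u})"

definition mu_u :: "real measure \<Rightarrow> (real \<Rightarrow> real) \<Rightarrow> real \<Rightarrow> real measure" where
  "mu_u \<mu> G u = measure_of UNIV (sets borel)
     (\<lambda>A. emeasure \<mu> (A \<inter> {..<G u}) + ennreal (u - measure \<mu> {..<G u}) * indicator A (G u))"

definition convex_minorant :: "(real \<Rightarrow> real) \<Rightarrow> real \<Rightarrow> real" where
  "convex_minorant f x = Sup {g x | g. convex_on UNIV g \<and> (\<forall>y. g y \<le> f y)}"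

text \<open>X^f and Z^f, valued in the extended reals (sup of empty set = -infinity,
  inf of empty set = +infinity).\<close>
definition X_f :: "(real \<Rightarrow> real) \<Rightarrow> real \<Rightarrow> ereal" where
  "X_f f y = Sup (ereal ` {x. x \<le> y \<and> convex_minorant f x = f x})"

definition Z_f :: "(real \<Rightarrow> real) \<Rightarrow> real \<Rightarrow> ereal" where
  "Z_f f y = Inf (ereal ` {z. y \<le> z \<and> convex_minorant f z = f z})"

end

theory Submission
  imports Defs
begin

text \<open>The function \<open>\<E>\<^sub>u = P\<^sub>\<nu> - P\<^bsub>\<mu>\<^sub>u\<^esub>\<close> is continuous, being a difference of put price functions
  of finite measures, and its largest convex minorant is convex and hence continuous. So the
  contact set \<open>{\<E>\<^sub>u\<^sup>c = \<E>\<^sub>u}\<close> is closed, and for a closed set \<open>T\<close> both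
  \<open>sup (T \<inter> (-\<infinity>, y]) = y\<close> and \<open>inf (T \<inter> [y, \<infinity>)) = y\<close> say exactly that \<open>y \<in> T\<close>.
  Thus \<open>Q(u) = G(u)\<close> and \<open>S(u) = G(u)\<close> are both equivalent to \<open>\<E>\<^sub>u\<^sup>c(G(u)) = \<E>\<^sub>u(G(u))\<close>.\<close>

lemma convex_on_convex_minorant:
  assumes "convex_on UNIV g" and "\<And>y. g y \<le> f y"
  shows "convex_on UNIV (convex_minorant f)"
proof (rule convex_onI)
  let ?S = "\<lambda>x. {g x | g. convex_on UNIV g \<and> (\<forall>y. g y \<le> f y)}"
  have nonempty: "?S x \<noteq> {}" for x using assms by blast
  have bounded: "bdd_above (?S x)" for x by (auto intro!: bdd_aboveI[of _ "f x"])
  fix t x y :: real assume t: "0 < t" "t < 1"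
  show "convex_minorant f ((1 - t) *\<^sub>R x + t *\<^sub>R y)
      \<le> (1 - t) * convex_minorant f x + t * convex_minorant f y"
    unfolding convex_minorant_def
  proof (rule cSup_least[OF nonempty])
    fix z assume "z \<in> ?S ((1 - t) *\<^sub>R x + t *\<^sub>R y)"
    then obtain h where h: "convex_on UNIV h" "\<forall>y. h y \<le> f y"
      and z: "z = h ((1 - t) *\<^sub>R x + t *\<^sub>R y)" by blast
    have "z \<le> (1 - t) * h x + t * h y" using convex_onD[OF h(1), of t x y] t z by simp
    also have "\<dots> \<le> (1 - t) * Sup (?S x) + t * Sup (?S y)"
      using h t by (intro add_mono mult_left_mono cSup_upper bounded) auto
    finally show "z \<le> (1 - t) * Sup (?S x) + t * Sup (?S y)" .
  qed
qed simp

lemma continuous_on_convex_minorant: "continuous_on UNIV (convex_minorant f)"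
proof (cases "\<exists>g. convex_on UNIV g \<and> (\<forall>y. g y \<le> f y)")
  case True
  then show ?thesis
    using convex_on_convex_minorant convex_on_continuous[of UNIV] by (metis open_UNIV)
next
  case False
  then have "{g x | g. convex_on UNIV g \<and> (\<forall>y. g y \<le> f y)} = {}" for x by blast
  then have "convex_minorant f = (\<lambda>_. Sup {})"
    unfolding convex_minorant_def by (simp only:)
  then show ?thesis by simp
qed

lemma ereal_Sup_closed_atMost_eq_iff:
  fixes T :: "real set"
  assumes "closed T"
  shows "Sup (ereal ` {x \<in> T. x \<le> y}) = ereal y \<longleftrightarrow> y \<in> T"
proof
  assume "y \<in> T"
  then show "Sup (ereal ` {x \<in> T. x \<le> y}) = ereal y" by (intro Sup_eqI) auto
next
  assume Sup_eq: "Sup (ereal ` {x \<in> T. x \<le> y}) = ereal y"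
  show "y \<in> T"
  proof (rule ccontr)
    assume "y \<notin> T"
    then obtain e where e: "e > 0" "ball y e \<subseteq> - T"
      using assms open_contains_ball[of "- T"] by (auto simp: closed_def)
    then have "Sup (ereal ` {x \<in> T. x \<le> y}) \<le> ereal (y - e)"
      by (intro Sup_least) (force simp: dist_real_def subset_eq)
    then show False using Sup_eq e by simp
  qed
qed

lemma ereal_Inf_closed_atLeast_eq_iff:
  fixes T :: "real set"
  assumes "closed T"
  shows "Inf (ereal ` {x \<in> T. y \<le> x}) = ereal y \<longleftrightarrow> y \<in> T"
proof -
  have "uminus ` ereal ` {x \<in> T. y \<le> x} = ereal ` {x \<in> uminus ` T. x \<le> - y}"
    by (force simp: image_iff)
  then have "Inf (ereal ` {x \<in> T. y \<le> x}) = - Sup (ereal ` {x \<in> uminus ` T. x \<le> - y})"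
    by (metis ereal_Sup_uminus_image_eq ereal_uminus_uminus)
  moreover have "closed (uminus ` T)" using closed_negations[OF assms] by simp
  ultimately show ?thesis
    using ereal_Sup_closed_atMost_eq_iff[of "uminus ` T" "- y"] ereal_uminus_eq_reorder
    by (auto simp: image_iff)
qed

lemma closed_contact_set:
  assumes "continuous_on UNIV f"
  shows "closed {x. convex_minorant f x = f x}"
  using closed_Collect_eq[OF continuous_on_convex_minorant assms] .

lemma X_f_eq_iff_contact:
  assumes "continuous_on UNIV f"
  shows "X_f f y = ereal y \<longleftrightarrow> convex_minorant f y = f y"
  using ereal_Sup_closed_atMost_eq_iff[OF closed_contact_set[OF assms], of y]
  by (simp add: X_f_def conj_commute)

lemma Z_f_eq_iff_contact:
  assumes "continuous_on UNIV f"
  shows "Z_f f y = ereal y \<longleftrightarrow> convex_minorant f y = f y"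
  using ereal_Inf_closed_atLeast_eq_iff[OF closed_contact_set[OF assms], of y]
  by (simp add: Z_f_def conj_commute)

lemma emeasure_measure_of_le: "emeasure (measure_of \<Omega> A f) B \<le> f B"
  by (simp add: emeasure_measure_of_conv)

lemma sets_mu_u: "sets (mu_u \<mu> G u) = sets borel"
  unfolding mu_u_def by (simp add: sets.sigma_sets_eq[of borel, simplified])

text \<open>The bound by the defining set function holds for \<open>measure_of\<close> of any set function, so the
  countable additivity behind \<open>\<mu>\<^sub>u\<close> never has to be checked.\<close>

lemma finite_measure_mu_u:
  assumes "finite_measure \<mu>"
  shows "finite_measure (mu_u \<mu> G u)"
proof
  have "emeasure (mu_u \<mu> G u) (space (mu_u \<mu> G u))
      \<le> emeasure \<mu> (space (mu_u \<mu> G u) \<inter> {..<G u})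
         + ennreal (u - measure \<mu> {..<G u}) * indicator (space (mu_u \<mu> G u)) (G u)"
    unfolding mu_u_def by (rule emeasure_measure_of_le)
  also have "\<dots> < \<infinity>"
    using finite_measure.emeasure_finite[OF assms]
    by (simp add: less_top ennreal_mult_less_top split: split_indicator)
  finally show "emeasure (mu_u \<mu> G u) (space (mu_u \<mu> G u)) \<noteq> \<infinity>" by simp
qed

lemma integrable_put_payoff_shift:
  assumes "finite_measure N" and "sets N = sets borel"
    and "integrable N (\<lambda>x. max 0 (k - x))"
  shows "integrable N (\<lambda>x. max 0 (k' - x :: real))"
proof -
  interpret finite_measure N by fact
  have "integrable N (\<lambda>x. max 0 (k - x) + \<bar>k' - k\<bar>)" using assms(3) by simp
  then show ?thesis
    by (rule Bochner_Integration.integrable_bound[OF _ _ AE_I2])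
      (auto simp: measurable_cong_sets[OF assms(2) refl])
qed

lemma continuous_on_put_price:
  assumes "finite_measure N" and "sets N = sets borel"
  shows "continuous_on UNIV (put_price N)"
proof (cases "integrable N (\<lambda>x. max 0 (0 - x :: real))")
  case True
  then have int: "integrable N (\<lambda>x. max 0 (k - x))" for k
    using integrable_put_payoff_shift[OF assms] by blast
  show ?thesis
  proof (rule lipschitz_on_continuous_on, rule lipschitz_onI)
    fix k k' :: real
    have "dist (put_price N k) (put_price N k') = \<bar>\<integral>x. max 0 (k - x) - max 0 (k' - x) \<partial>N\<bar>"
      using int by (simp add: put_price_def dist_real_def)
    also have "\<dots> \<le> (\<integral>x. \<bar>max 0 (k - x) - max 0 (k' - x)\<bar> \<partial>N)"
      using integral_norm_bound[of N "\<lambda>x. max 0 (k - x) - max 0 (k' - x)"] by simp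
    also have "\<dots> \<le> (\<integral>x. \<bar>k - k'\<bar> \<partial>N)"
      using int finite_measure.integrable_const[OF assms(1)] by (intro integral_mono) auto
    also have "\<dots> = measure N (space N) * dist k k'" by (simp add: dist_real_def)
    finally show "dist (put_price N k) (put_price N k') \<le> measure N (space N) * dist k k'" .
  qed simp
next
  case False
  \<comment> \<open>then no put payoff is integrable, and all the Bochner integrals are \<open>0\<close>\<close>
  then have "\<not> integrable N (\<lambda>x. max 0 (k - x))" for k
    using integrable_put_payoff_shift[OF assms] by blast
  then have "put_price N = (\<lambda>_. 0)"
    by (simp add: put_price_def fun_eq_iff not_integrable_integral_eq)
  then show ?thesis by simp
qed

theorem lemma4p1:
  fixes \<mu> \<nu> :: "real measure" and G :: "real \<Rightarrow> real" and u :: real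
  assumes "prob_space \<mu>" and "prob_space \<nu>"
    and "sets \<mu> = sets borel" and "sets \<nu> = sets borel"
    and "integrable \<mu> (\<lambda>x. x)" and "integrable \<nu> (\<lambda>x. x)"
    and "convex_order \<mu> \<nu>"
    and "is_interval {k. put_price \<nu> k - put_price \<mu> k > 0}"
    and "quantile_function \<mu> G"
    and "u \<in> {0<..<1}"
  shows "X_f (\<lambda>k. put_price \<nu> k - put_price (mu_u \<mu> G u) k) (G u) = ereal (G u)
     \<longleftrightarrow> Z_f (\<lambda>k. put_price \<nu> k - put_price (mu_u \<mu> G u) k) (G u) = ereal (G u)"
proof -
  have "finite_measure \<mu>" "finite_measure \<nu>"
    using assms(1,2) by (simp_all add: prob_space_def)
  then have "continuous_on UNIV (put_price \<nu>)" "continuous_on UNIV (put_price (mu_u \<mu> G u))"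
    using continuous_on_put_price finite_measure_mu_u sets_mu_u assms(4) by blast+
  then have "continuous_on UNIV (\<lambda>k. put_price \<nu> k - put_price (mu_u \<mu> G u) k)"
    by (intro continuous_on_diff)
  then show ?thesis by (simp add: X_f_eq_iff_contact Z_f_eq_iff_contact)
qed

end
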